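(* Let $f=a_1+2a_2+4a_3\in\mathcal{GB}_n^8$ with $a_1,a_2,a_3\in\mathcal{B}_n$. If $f$ is gbent, then its Gray image $\psi(f)(\mathbf{x},y_1,y_2)=a_1(\mathbf{x})y_1\oplus a_2(\mathbf{x})y_2\oplus a_3(\mathbf{x})$ is a semibent function in $\mathcal{B}_{n+2}$.
   Context: $\mathcal{B}_m$: Boolean functions $\mathbb{F}_2^m\to\mathbb{F}_2$; $\mathcal{GB}_n^q$: functions $\mathbb{F}_2^n\to\mathbb{Z}_q$ (Boolean values viewed as integers, sum in $\mathbb{Z}_8$). $\mathcal{H}^{(q)}_f(\mathbf{u})=\sum_{\mathbf{x}}\zeta_q^{f(\mathbf{x})}(-1)^{\mathbf{u}\cdot\mathbf{x}}$ with $\zeta_q=e^{2\pi i/q}$; $f$ is gbent if $|\mathcal{H}^{(q)}_f(\mathbf{u})|=2^{n/2}$ for all $\mathbf{u}$. $\mathcal{W}_g(\mathbf{w})=\sum_{\mathbf{z}}(-1)^{g(\mathbf{z})+\mathbf{w}\cdot\mathbf{z}}$. A Boolean function $g$ on $\mathbb{F}_2^m$ is $s$-plateaued if $|\mathcal{W}_g(\mathbf{w})|\in\{0,2^{(m+s)/2}\}$ for all $\mathbf{w}$; it is semibent if it is $1$-plateaued ($m$ odd) or $2$-plateaued ($m$ even). *)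

theory Defs
  imports Complex_Main
begin

text \<open>Vectors of F_2^n are boolean lists of length n.\<close>
definition vecs :: "nat \<Rightarrow> bool list set" where
  "vecs n = {xs. length xs = n}"

definition dotp :: "bool list \<Rightarrow> bool list \<Rightarrow> bool" where
  "dotp u x = odd (card {i. i < length x \<and> u ! i \<and> x ! i})"

definition sgnb :: "bool \<Rightarrow> real" where
  "sgnb b = (if b then -1 else 1)"

definition gwalsh :: "nat \<Rightarrow> nat \<Rightarrow> (bool list \<Rightarrow> int) \<Rightarrow> bool list \<Rightarrow> complex" where
  "gwalsh q n f u = (\<Sum>x\<in>vecs n. cis (2 * pi * of_int (f x) / of_nat q) * complex_of_real (sgnb (dotp u x)))"

definition gbent :: "nat \<Rightarrow> nat \<Rightarrow> (bool list \<Rightarrow> int) \<Rightarrow> bool" where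
  "gbent q n f = (\<forall>u\<in>vecs n. cmod (gwalsh q n f u) = 2 powr (real n / 2))"

definition walsh :: "nat \<Rightarrow> (bool list \<Rightarrow> bool) \<Rightarrow> bool list \<Rightarrow> real" where
  "walsh m g w = (\<Sum>z\<in>vecs m. sgnb (g z \<noteq> dotp w z))"

definition plateaued :: "nat \<Rightarrow> nat \<Rightarrow> (bool list \<Rightarrow> bool) \<Rightarrow> bool" where
  "plateaued s m g = (\<forall>w\<in>vecs m. \<bar>walsh m g w\<bar> \<in> {0, 2 powr ((real m + real s) / 2)})"

definition semibent :: "nat \<Rightarrow> (bool list \<Rightarrow> bool) \<Rightarrow> bool" where
  "semibent m g = ((odd m \<and> plateaued 1 m g) \<or> (even m \<and> plateaued 2 m g))"

definition gbf :: "(bool list \<Rightarrow> bool) \<Rightarrow> (bool list \<Rightarrow> bool) \<Rightarrow> (bool list \<Rightarrow> bool) \<Rightarrow> bool list \<Rightarrow> int" where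
  "gbf a1 a2 a3 x = of_bool (a1 x) + 2 * of_bool (a2 x) + 4 * of_bool (a3 x)"

text \<open>Gray image on F_2^(n+2): input z = x @ [y1, y2].\<close>
definition gray :: "nat \<Rightarrow> (bool list \<Rightarrow> bool) \<Rightarrow> (bool list \<Rightarrow> bool) \<Rightarrow> (bool list \<Rightarrow> bool) \<Rightarrow> bool list \<Rightarrow> bool" where
  "gray n a1 a2 a3 z = (let x = take n z; y1 = z ! n; y2 = z ! (n+1) in
     ((a1 x \<and> y1) \<noteq> (a2 x \<and> y2)) \<noteq> a3 x)"

end

theory Submission
  imports Defs
begin

text \<open>Split \<open>F\<^sub>2\<^sup>n\<close> according to the value \<open>v\<close> of \<open>(a1, a2)\<close>, and let \<open>S\<^sub>v(u)\<close> be the Walsh sum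
  of \<open>a3\<close> at \<open>u\<close> over the piece where \<open>(a1, a2) = v\<close>. Summing out \<open>y1, y2\<close> shows that the
  Walsh transform of the Gray image at \<open>(u, v)\<close> is \<open>4 S\<^sub>v(u)\<close>, while with \<open>\<zeta> = cis (\<pi>/4)\<close> the
  generalized transform is \<open>H(u) = S\<^sub>0\<^sub>0 + i S\<^sub>0\<^sub>1 + \<zeta> S\<^sub>1\<^sub>0 + \<zeta> i S\<^sub>1\<^sub>1\<close>. Its squared modulus is
  \<open>\<Sum> S\<^sub>v\<^sup>2 + \<surd>2 \<cdot> (cross term)\<close>, so by irrationality of \<open>\<surd>2\<close> gbentness means \<open>\<Sum> S\<^sub>v\<^sup>2 = 2\<^sup>n\<close>
  with vanishing cross term. A 2-adic descent then forces every \<open>|S\<^sub>v(u)|\<close> to be \<open>0\<close> or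
  \<open>2^(n div 2)\<close>, so the Gray image has Walsh values of modulus \<open>0\<close> or \<open>2^(n div 2 + 2)\<close>.\<close>

lemma int_square_mod_4: "(x::int)^2 mod 4 = (if even x then 0 else 1)"
proof (cases "even x")
  case True
  then obtain k where "x = 2*k" by blast
  then show ?thesis by (simp add: power2_eq_square)
next
  case False
  then obtain k where "x = 2*k + 1" using oddE by blast
  then have "x^2 = 1 + (k*k + k) * 4" by (simp add: power2_eq_square algebra_simps)
  then have "x^2 mod 4 = 1 mod 4" by (simp only: mod_mult_self1)
  then show ?thesis using False by simp
qed

lemma four_squares_dvd_4_same_parity:
  fixes p q r s :: int
  assumes "4 dvd p^2 + q^2 + r^2 + s^2"
  shows "even p = even q \<and> even q = even r \<and> even r = even s"
proof -
  have "\<exists>d. x^2 = 4 * d + (if even x then 0 else 1)" for x :: int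
    using div_mult_mod_eq[of "x^2" 4] unfolding int_square_mod_4 by (metis mult.commute)
  then obtain dp dq dr ds where "p^2 = 4 * dp + (if even p then 0 else 1)"
    "q^2 = 4 * dq + (if even q then 0 else 1)" "r^2 = 4 * dr + (if even r then 0 else 1)"
    "s^2 = 4 * ds + (if even s then 0 else 1)" by metis
  with assms have "4 dvd 4 * (dp + dq + dr + ds) + (if even p then 0 else 1)
      + (if even q then 0 else 1) + (if even r then 0 else 1) + (if even s then 0 else 1)"
    by (simp add: algebra_simps)
  then show ?thesis by (cases "even p"; cases "even q"; cases "even r"; cases "even s") presburger+
qed

lemma int_square_eq_double_square_imp_zero:
  fixes m k :: int
  assumes "m^2 = 2 * k^2"
  shows "k = 0"
  using assms
proof (induction "nat \<bar>k\<bar>" arbitrary: m k rule: less_induct)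
  case less
  show ?case
  proof (rule ccontr)
    assume "k \<noteq> 0"
    have "even m" using less.prems by (metis dvd_triv_left even_power pos2)
    then obtain m' where "m = 2 * m'" by blast
    then have "k^2 = 2 * m'^2" using less.prems by (simp add: power2_eq_square)
    then have "even k" by (metis dvd_triv_left even_power pos2)
    then obtain k' where k': "k = 2 * k'" by blast
    have "m'^2 = 2 * k'^2" using \<open>k^2 = 2 * m'^2\<close> k' by (simp add: power2_eq_square)
    moreover have "nat \<bar>k'\<bar> < nat \<bar>k\<bar>" using k' \<open>k \<noteq> 0\<close> by auto
    ultimately have "k' = 0" using less.hyps by blast
    then show False using k' \<open>k \<noteq> 0\<close> by simp
  qed
qed

lemma int_plus_sqrt2_eq_int:
  fixes a b c :: int
  assumes "of_int a + sqrt 2 * of_int b = of_int c"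
  shows "b = 0 \<and> a = c"
proof -
  have "of_int (c - a) = sqrt 2 * of_int b" using assms by simp
  then have "of_int ((c - a)^2) = (of_int (2 * b^2) :: real)" by (simp add: power_mult_distrib)
  then have "(c - a)^2 = 2 * b^2" by (simp only: of_int_eq_iff)
  then have "b = 0" by (rule int_square_eq_double_square_imp_zero)
  then show ?thesis using assms by simp
qed

lemma odd_cross_term_nonzero:
  fixes p q r s :: int
  assumes "odd p" "odd q" "odd r" "odd s"
  shows "p * (r - s) + q * (r + s) \<noteq> 0"
proof
  assume cross: "p * (r - s) + q * (r + s) = 0"
  have "even (r - s)" "even (r + s)" using assms by simp_all
  then obtain e f where ef: "r - s = 2 * e" "r + s = 2 * f" by (elim evenE)
  have "p * e + q * f = 0" using cross ef by (simp add: algebra_simps)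
  moreover have "e + f = r" using ef by linarith
  then have "odd (e + f)" using \<open>odd r\<close> by simp
  then have "odd (p * e + q * f)" using assms by auto
  ultimately show False by simp
qed

lemma four_squares_power_two_components:
  fixes p q r s :: int
  assumes "p^2 + q^2 + r^2 + s^2 = 2^n" and "p * (r - s) + q * (r + s) = 0"
  shows "\<forall>x\<in>{p, q, r, s}. \<bar>x\<bar> \<in> {0, 2^(n div 2)}"
  using assms
proof (induction n arbitrary: p q r s rule: less_induct)
  case (less n)
  show ?case
  proof (cases "n \<le> 1")
    case True
    have "\<bar>x\<bar> \<le> 1" if "x \<in> {p, q, r, s}" for x
    proof (rule ccontr)
      assume "\<not> \<bar>x\<bar> \<le> 1"
      then have "2^2 \<le> \<bar>x\<bar>^2" by (intro power_mono) auto
      moreover have "x^2 \<le> 2^n"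
        using that less.prems(1) zero_le_power2[of p] zero_le_power2[of q] zero_le_power2[of r]
          zero_le_power2[of s] by (elim insertE emptyE) (hypsubst, linarith)+
      moreover have "(2::int)^n \<le> 2" using True by (cases n) auto
      ultimately show False by simp
    qed
    with True show ?thesis by force
  next
    case False
    then obtain m where n: "n = m + 2" by (metis add.commute le_Suc_ex not_less_eq_eq one_add_one plus_1_eq_Suc)
    then have "4 dvd p^2 + q^2 + r^2 + s^2" using less.prems(1) by (simp add: power_add)
    then have parity: "even p = even q \<and> even q = even r \<and> even r = even s"
      by (rule four_squares_dvd_4_same_parity)
    show ?thesis
    proof (cases "even p")
      case True
      with parity obtain p' q' r' s' where halves: "p = 2 * p'" "q = 2 * q'" "r = 2 * r'" "s = 2 * s'"
        by (metis evenE)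
      have "4 * (p'^2 + q'^2 + r'^2 + s'^2) = 4 * 2^m"
        using less.prems(1) halves n by (simp add: power2_eq_square power_add algebra_simps)
      moreover have "4 * (p' * (r' - s') + q' * (r' + s')) = 0"
        using less.prems(2) halves by (simp add: algebra_simps)
      ultimately have "p'^2 + q'^2 + r'^2 + s'^2 = 2^m" "p' * (r' - s') + q' * (r' + s') = 0"
        by simp_all
      with n have "\<forall>x\<in>{p', q', r', s'}. \<bar>x\<bar> \<in> {0, 2^(m div 2)}"
        by (intro less.IH) simp_all
      moreover have "n div 2 = Suc (m div 2)" using n by simp
      ultimately show ?thesis using halves by (auto simp: abs_mult)
    next
      case False
      with parity have "p * (r - s) + q * (r + s) \<noteq> 0" by (intro odd_cross_term_nonzero) auto
      with less.prems(2) show ?thesis by contradiction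
    qed
  qed
qed

lemma finite_vecs: "finite (vecs n)"
  using finite_lists_length_eq[of "UNIV :: bool set" n] by (simp add: vecs_def)

lemma sum_vecs_Suc: "(\<Sum>z\<in>vecs (Suc m). g z) = (\<Sum>x\<in>vecs m. g (x @ [False]) + g (x @ [True]))"
proof -
  have "vecs (Suc m) = (\<lambda>x. x @ [False]) ` vecs m \<union> (\<lambda>x. x @ [True]) ` vecs m"
  proof (intro equalityI subsetI)
    fix z assume "z \<in> vecs (Suc m)"
    then have "z = butlast z @ [last z]" "butlast z \<in> vecs m"
      by (auto simp: vecs_def intro!: append_butlast_last_id[symmetric])
    then show "z \<in> (\<lambda>x. x @ [False]) ` vecs m \<union> (\<lambda>x. x @ [True]) ` vecs m"
      by (cases "last z") auto
  qed (auto simp: vecs_def)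
  then have "(\<Sum>z\<in>vecs (Suc m). g z)
      = (\<Sum>z\<in>(\<lambda>x. x @ [False]) ` vecs m. g z) + (\<Sum>z\<in>(\<lambda>x. x @ [True]) ` vecs m. g z)"
    by (simp only:) (rule sum.union_disjoint; auto simp: finite_vecs)
  also have "\<dots> = (\<Sum>x\<in>vecs m. g (x @ [False])) + (\<Sum>x\<in>vecs m. g (x @ [True]))"
    by (simp add: sum.reindex inj_on_def)
  finally show ?thesis by (simp add: sum.distrib)
qed

lemma dotp_snoc:
  assumes "length u = length x"
  shows "dotp (u @ [a]) (x @ [b]) = (dotp u x \<noteq> (a \<and> b))"
proof -
  have "{i. i < length (x @ [b]) \<and> (u @ [a]) ! i \<and> (x @ [b]) ! i}
      = {i. i < length x \<and> u ! i \<and> x ! i} \<union> (if a \<and> b then {length x} else {})"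
    using assms by (auto simp: nth_append less_Suc_eq)
  then show ?thesis unfolding dotp_def by (auto simp: card_insert_if)
qed

lemma append_take_two_nth:
  assumes "length w = n + 2" shows "w = take n w @ [w ! n, w ! Suc n]"
proof -
  have "drop n w = [w ! n, w ! Suc n]"
    using assms by (intro nth_equalityI) (auto simp: less_2_cases_iff)
  then show ?thesis by (metis append_take_drop_id)
qed

definition partial_walsh ::
    "(bool list \<Rightarrow> bool) \<Rightarrow> (bool list \<Rightarrow> bool) \<Rightarrow> (bool list \<Rightarrow> bool) \<Rightarrow> nat \<Rightarrow> bool \<Rightarrow> bool \<Rightarrow> bool list \<Rightarrow> int"
  where "partial_walsh a1 a2 a3 n v1 v2 u =
    (\<Sum>x\<in>vecs n. if a1 x = v1 \<and> a2 x = v2 then (if a3 x \<noteq> dotp u x then -1 else 1) else 0)"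

lemma walsh_gray_snoc:
  assumes "length u = n"
  shows "walsh (n + 2) (gray n a1 a2 a3) (u @ [v1, v2]) = 4 * of_int (partial_walsh a1 a2 a3 n v1 v2 u)"
proof -
  have "walsh (n + 2) (gray n a1 a2 a3) (u @ [v1, v2]) =
    (\<Sum>x\<in>vecs n. \<Sum>y1\<in>{False, True}. \<Sum>y2\<in>{False, True}.
        sgnb (gray n a1 a2 a3 (x @ [y1, y2]) \<noteq> dotp (u @ [v1, v2]) (x @ [y1, y2])))"
    unfolding walsh_def by (simp add: sum_vecs_Suc add_ac)
  also have "\<dots> = (\<Sum>x\<in>vecs n. 4 * of_int
      (if a1 x = v1 \<and> a2 x = v2 then (if a3 x \<noteq> dotp u x then -1 else 1) else 0))"
  proof (rule sum.cong[OF refl])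
    fix x assume "x \<in> vecs n"
    then have "length x = n" by (simp add: vecs_def)
    with assms have "gray n a1 a2 a3 (x @ [y1, y2]) = (((a1 x \<and> y1) \<noteq> (a2 x \<and> y2)) \<noteq> a3 x)"
      and "dotp (u @ [v1, v2]) (x @ [y1, y2]) = ((dotp u x \<noteq> (v1 \<and> y1)) \<noteq> (v2 \<and> y2))" for y1 y2
      using dotp_snoc[of "u @ [v1]" "x @ [y1]" v2 y2] dotp_snoc[of u x v1 y1]
      by (simp_all add: gray_def nth_append)
    then show "(\<Sum>y1\<in>{False, True}. \<Sum>y2\<in>{False, True}.
        sgnb (gray n a1 a2 a3 (x @ [y1, y2]) \<noteq> dotp (u @ [v1, v2]) (x @ [y1, y2]))) =
      4 * of_int (if a1 x = v1 \<and> a2 x = v2 then (if a3 x \<noteq> dotp u x then -1 else 1) else 0)"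
      by (cases "a1 x"; cases "a2 x"; cases "a3 x"; cases "dotp u x"; cases v1; cases v2)
        (simp_all add: sgnb_def)
  qed
  also have "\<dots> = 4 * of_int (partial_walsh a1 a2 a3 n v1 v2 u)"
    unfolding partial_walsh_def by (simp add: sum_distrib_left)
  finally show ?thesis .
qed

lemma walsh_gray:
  assumes "w \<in> vecs (n + 2)"
  shows "walsh (n + 2) (gray n a1 a2 a3) w
    = 4 * of_int (partial_walsh a1 a2 a3 n (w ! n) (w ! Suc n) (take n w))"
proof -
  have "length w = n + 2" using assms by (simp add: vecs_def)
  then have "walsh (n + 2) (gray n a1 a2 a3) w
      = walsh (n + 2) (gray n a1 a2 a3) (take n w @ [w ! n, w ! Suc n])"
    using append_take_two_nth by metis
  also have "\<dots> = 4 * of_int (partial_walsh a1 a2 a3 n (w ! n) (w ! Suc n) (take n w))"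
    using \<open>length w = n + 2\<close> by (intro walsh_gray_snoc) simp
  finally show ?thesis .
qed

lemma cis_eighth_root_gbf:
  "cis (2 * pi * of_int (gbf a1 a2 a3 x) / of_nat 8)
    = (if a1 x then cis (pi / 4) else 1) * (if a2 x then \<i> else 1) * (if a3 x then -1 else 1)"
proof -
  have "2 * pi * of_int (gbf a1 a2 a3 x) / of_nat 8
      = of_bool (a1 x) * (pi / 4) + of_bool (a2 x) * (pi / 2) + of_bool (a3 x) * pi"
    by (simp add: gbf_def field_simps)
  moreover have "cis (of_bool b * t) = (if b then cis t else 1)" for b t by (cases b) simp_all
  ultimately show ?thesis by (simp only: cis_mult[symmetric] cis_pi_half cis_pi)
qed

lemma gwalsh_gbf:
  "gwalsh 8 n (gbf a1 a2 a3) u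
    = of_int (partial_walsh a1 a2 a3 n False False u) + \<i> * of_int (partial_walsh a1 a2 a3 n False True u)
      + cis (pi / 4) * of_int (partial_walsh a1 a2 a3 n True False u)
      + cis (pi / 4) * \<i> * of_int (partial_walsh a1 a2 a3 n True True u)"
proof -
  have "cis (2 * pi * of_int (gbf a1 a2 a3 x) / of_nat 8) * complex_of_real (sgnb (dotp u x))
      = of_int (if a1 x = False \<and> a2 x = False then (if a3 x \<noteq> dotp u x then -1 else 1) else 0)
      + \<i> * of_int (if a1 x = False \<and> a2 x = True then (if a3 x \<noteq> dotp u x then -1 else 1) else 0)
      + cis (pi / 4) * of_int (if a1 x = True \<and> a2 x = False then (if a3 x \<noteq> dotp u x then -1 else 1) else 0)
      + cis (pi / 4) * \<i> * of_int (if a1 x = True \<and> a2 x = True then (if a3 x \<noteq> dotp u x then -1 else 1) else 0)"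
    for x
    unfolding cis_eighth_root_gbf
    by (cases "a1 x"; cases "a2 x"; cases "a3 x"; cases "dotp u x") (simp_all add: sgnb_def)
  then show ?thesis
    unfolding gwalsh_def partial_walsh_def by (simp add: sum.distrib sum_distrib_left)
qed

lemma cmod_eighth_root_combination_squared:
  fixes p q r t :: int
  shows "(cmod (of_int p + \<i> * of_int q + cis (pi/4) * of_int r + cis (pi/4) * \<i> * of_int t))^2 =
     of_int (p^2 + q^2 + r^2 + t^2) + sqrt 2 * of_int (p*(r-t) + q*(r+t))"
  unfolding cmod_power2 by (simp add: cos_45 sin_45 power2_eq_square algebra_simps)

lemma gbent_partial_walsh:
  assumes "gbent 8 n (gbf a1 a2 a3)" and "u \<in> vecs n"
  shows "\<bar>partial_walsh a1 a2 a3 n v1 v2 u\<bar> \<in> {0, 2^(n div 2)}"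
proof -
  define p q r t where "p = partial_walsh a1 a2 a3 n False False u"
    and "q = partial_walsh a1 a2 a3 n False True u" and "r = partial_walsh a1 a2 a3 n True False u"
    and "t = partial_walsh a1 a2 a3 n True True u"
  have "(cmod (gwalsh 8 n (gbf a1 a2 a3) u))^2 = (2 powr (real n / 2))^2"
    using assms unfolding gbent_def by simp
  also have "\<dots> = 2^n" by (simp add: power2_eq_square powr_add[symmetric] powr_realpow)
  finally have "of_int (p^2 + q^2 + r^2 + t^2) + sqrt 2 * of_int (p * (r - t) + q * (r + t)) = of_int (2^n)"
    unfolding gwalsh_gbf cmod_eighth_root_combination_squared p_def q_def r_def t_def by simp
  then have "p * (r - t) + q * (r + t) = 0 \<and> p^2 + q^2 + r^2 + t^2 = 2^n"
    by (rule int_plus_sqrt2_eq_int)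
  then have "\<forall>x\<in>{p, q, r, t}. \<bar>x\<bar> \<in> {0, 2^(n div 2)}"
    using four_squares_power_two_components by blast
  then show ?thesis unfolding p_def q_def r_def t_def by (cases v1; cases v2) auto
qed

lemma four_times_two_power_half_eq_powr:
  "(4::real) * 2^(n div 2) = 2 powr ((real (n + 2) + real (if even n then 2 else 1)) / 2)"
proof -
  have exponent: "(real (n + 2) + real (if even n then 2 else 1)) / 2 = real (n div 2 + 2)"
    by (cases "even n") (auto elim!: evenE oddE)
  show ?thesis unfolding exponent by (subst powr_realpow) (simp_all add: power_add)
qed

theorem mainTheorem11:
  fixes n :: nat and a1 a2 a3 :: "bool list \<Rightarrow> bool"
  assumes "gbent 8 n (gbf a1 a2 a3)"
  shows "semibent (n + 2) (gray n a1 a2 a3)"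
proof -
  have "\<bar>walsh (n + 2) (gray n a1 a2 a3) w\<bar> \<in> {0, 4 * 2^(n div 2)}" if "w \<in> vecs (n + 2)" for w
  proof -
    define S where "S = partial_walsh a1 a2 a3 n (w ! n) (w ! Suc n) (take n w)"
    have "take n w \<in> vecs n" using that by (simp add: vecs_def)
    then have "\<bar>S\<bar> \<in> {0, 2^(n div 2)}"
      unfolding S_def by (rule gbent_partial_walsh[OF assms])
    then have "\<bar>of_int S\<bar> \<in> {0, (2::real)^(n div 2)}"
      by (auto simp flip: of_int_abs)
    then show ?thesis using walsh_gray[OF that] unfolding S_def by (auto simp: abs_mult)
  qed
  then show ?thesis
    unfolding semibent_def plateaued_def four_times_two_power_half_eq_powr
    by (cases "even n") auto
qed

end
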